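(* Let $H\ge1$, $W_j\in\mathbb{R}^{d_j\times d_{j-1}}$ for $j\in[H+1]$ be fixed matrices $\hat W_j$, write $\hat W_{i:j}=\hat W_i\cdots\hat W_j$ for $i\ge j$ and $\hat W_{j-1:j}=I$, fix $j^*\in[H+1]$ and $\epsilon>0$. Suppose $A:=\hat W_{H+1:j^*+1}$ has full row rank and $B:=\hat W_{j^*-1:1}$ has full column rank. Then any $R\in\mathbb{R}^{d_{H+1}\times d_0}$ satisfying $\|R-\hat W_{H+1:1}\|_F\le\sigma_{\min}(A)\sigma_{\min}(B)\epsilon$ can be written as $R=V_{H+1}V_H\cdots V_1$, where $$V_{j^*}=\hat W_{j^*}+A^T(AA^T)^{-1}(R-\hat W_{H+1:1})(B^TB)^{-1}B^T$$ and $V_j=\hat W_j$ for $j\ne j^*$; moreover $\|V_j-\hat W_j\|_F\le\epsilon$ for all $j$.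
   Context: $\sigma_{\min}(M)$ denotes the smallest singular value of $M$ (equivalently, for $A$ of full row rank, its $\mathrm{rank}$-th singular value, which is positive; similarly for $B$ of full column rank). $\|\cdot\|_F$ is the Frobenius norm. *)

theory Defs
  imports "Jordan_Normal_Form.DL_Rank" "Jordan_Normal_Form.Gauss_Jordan_Elimination"
          "Jordan_Normal_Form.Char_Poly"
begin

definition frob_norm :: "real mat \<Rightarrow> real" where
  "frob_norm M = sqrt (\<Sum>i<dim_row M. \<Sum>j<dim_col M. (M $$ (i,j))^2)"

definition mat_rank :: "real mat \<Rightarrow> nat" where
  "mat_rank M = vec_space.rank (dim_row M) M"

definition full_row_rank :: "real mat \<Rightarrow> bool" where
  "full_row_rank M \<longleftrightarrow> mat_rank M = dim_row M"

definition full_col_rank :: "real mat \<Rightarrow> bool" where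
  "full_col_rank M \<longleftrightarrow> mat_rank M = dim_col M"

text \<open>Smallest singular value of an m x n real matrix: the square root of the
  smallest eigenvalue of the min(m,n) x min(m,n) Gram matrix (M M^T if m <= n,
  else M^T M); these eigenvalues are the squares of the min(m,n) singular values.\<close>
definition sigma_min :: "real mat \<Rightarrow> real" where
  "sigma_min M = (if dim_row M \<le> dim_col M
     then sqrt (Min {k. eigenvalue (M * transpose_mat M) k})
     else sqrt (Min {k. eigenvalue (transpose_mat M * M) k}))"

definition minv :: "real mat \<Rightarrow> real mat" where
  "minv M = the (mat_inverse M)"

text \<open>Ordered product W_i * W_(i-1) * ... * W_j, where the empty product (i = j - 1)
  is the identity of size d (j - 1).\<close>
definition wprod :: "(nat \<Rightarrow> nat) \<Rightarrow> (nat \<Rightarrow> real mat) \<Rightarrow> nat \<Rightarrow> nat \<Rightarrow> real mat" where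
  "wprod d W i j = foldr (*) (map W (rev [j..<Suc i])) (1\<^sub>m (d (j - 1)))"

end

theory Submission
  imports Defs "HOL-Analysis.Function_Topology"
begin

(* With E = R - W_{H+1:1} and A, B the products above and below the j*-th factor,
   A W_{j*} B = W_{H+1:1}.  Replacing W_{j*} by W_{j*} + A^+ E B^+, where A^+ = A^T (A A^T)^-1
   is a right inverse of A and B^+ = (B^T B)^-1 B^T a left inverse of B, therefore adds exactly
   A A^+ E B^+ B = E to the product.  The size of the correction is controlled by
   |A^+ x| <= |x| / sigma_min A and, by transposition, by the same bound for B^+.  Writing
   x = A A^T y, that bound says that the least eigenvalue of the symmetric matrix A A^T is a lower
   bound for its Rayleigh quotient, which follows by minimising the quadratic form on the unit
   sphere. *)

section \<open>Rayleigh quotient of a real symmetric matrix\<close>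

lemma quadratic_form_add_scaled:
  fixes N :: "nat \<Rightarrow> nat \<Rightarrow> real"
  assumes sym: "\<And>i j. i < n \<Longrightarrow> j < n \<Longrightarrow> N i j = N j i"
  shows "(\<Sum>i<n. \<Sum>j<n. (v i + s * z i) * N i j * (v j + s * z j))
     = (\<Sum>i<n. \<Sum>j<n. v i * N i j * v j) + 2 * s * (\<Sum>i<n. z i * (\<Sum>j<n. N i j * v j))
       + s\<^sup>2 * (\<Sum>i<n. \<Sum>j<n. z i * N i j * z j)"
proof -
  have expand: "(v i + s * z i) * N i j * (v j + s * z j) = v i * N i j * v j
      + s * (v i * N i j * z j) + s * (z i * N i j * v j) + s\<^sup>2 * (z i * N i j * z j)" for i j
    by (simp add: algebra_simps power2_eq_square)
  have "(\<Sum>i<n. \<Sum>j<n. v i * N i j * z j) = (\<Sum>j<n. \<Sum>i<n. v i * N i j * z j)"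
    by (rule sum.swap)
  also have "\<dots> = (\<Sum>j<n. z j * (\<Sum>i<n. N j i * v i))"
  proof (rule sum.cong[OF refl])
    fix j assume "j \<in> {..<n}"
    then have "i < n \<Longrightarrow> N i j = N j i" for i
      using sym by simp
    then show "(\<Sum>i<n. v i * N i j * z j) = z j * (\<Sum>i<n. N j i * v i)"
      by (simp add: sum_distrib_left algebra_simps)
  qed
  finally have cross: "(\<Sum>i<n. \<Sum>j<n. v i * N i j * z j) = (\<Sum>i<n. z i * (\<Sum>j<n. N i j * v j))" .
  have "(\<Sum>i<n. \<Sum>j<n. z i * N i j * v j) = (\<Sum>i<n. z i * (\<Sum>j<n. N i j * v j))"
    by (simp add: sum_distrib_left algebra_simps)
  with cross show ?thesis
    unfolding expand sum.distrib sum_distrib_left[symmetric] by (simp add: algebra_simps)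
qed

lemma nonneg_quadratic_linear_coeff_eq_0:
  fixes a b :: real
  assumes "a \<ge> 0" and nonneg: "\<And>s. 0 \<le> 2 * s * b + s\<^sup>2 * a"
  shows "b = 0"
proof -
  define s where "s = - b / (a + 1)"
  have sa: "s * (a + 1) = - b"
    unfolding s_def using \<open>a \<ge> 0\<close> by simp
  have "(2 * s * b + s\<^sup>2 * a) * (a + 1)\<^sup>2 = 2 * b * (s * (a + 1)) * (a + 1) + a * (s * (a + 1))\<^sup>2"
    by (simp add: algebra_simps power2_eq_square)
  also have "\<dots> = - b\<^sup>2 * (a + 2)"
    unfolding sa by (simp add: algebra_simps power2_eq_square)
  finally have "0 \<le> - b\<^sup>2 * (a + 2)"
    using nonneg[of s] by (metis zero_le_mult_iff zero_le_power2)
  then have "b\<^sup>2 \<le> 0"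
    using \<open>a \<ge> 0\<close> by (simp add: mult_le_0_iff)
  then show "b = 0" by simp
qed

lemma compact_PiE_cube:
  "compact (PiE UNIV (\<lambda>i::nat. if i < n then {-1..1} else {0::real}))"
proof -
  have "compactin (product_topology (\<lambda>i. euclidean) UNIV)
          (PiE UNIV (\<lambda>i::nat. if i < n then {-1..1} else {0::real}))"
    by (subst compactin_PiE) (auto simp: compactin_euclidean_iff)
  then show ?thesis
    by (simp add: euclidean_product_topology compactin_euclidean_iff)
qed

lemma quadratic_form_ge_of_unit_sphere:
  fixes N :: "nat \<Rightarrow> nat \<Rightarrow> real"
  assumes min: "\<And>g. (\<Sum>i<n. (g i)\<^sup>2) = 1 \<Longrightarrow> c \<le> (\<Sum>i<n. \<Sum>j<n. g i * N i j * g j)"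
  shows "c * (\<Sum>i<n. (f i)\<^sup>2) \<le> (\<Sum>i<n. \<Sum>j<n. f i * N i j * f j)"
proof -
  define Q where "Q f = (\<Sum>i<n. \<Sum>j<n. f i * N i j * f j)" for f :: "nat \<Rightarrow> real"
  define L where "L f = (\<Sum>i<n. (f i)\<^sup>2)" for f :: "nat \<Rightarrow> real"
  show ?thesis
  proof (cases "L f = 0")
    case True
    then have "\<forall>i<n. f i = 0"
      unfolding L_def by (simp add: sum_nonneg_eq_0_iff)
    then show ?thesis
      using True by (simp add: L_def)
  next
    case False
    then have "L f > 0"
      unfolding L_def by (metis less_eq_real_def sum_nonneg zero_le_power2)
    define t where "t = sqrt (L f)"
    have "t > 0" "t\<^sup>2 = L f"
      unfolding t_def using \<open>L f > 0\<close> by auto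
    have "L (\<lambda>i. f i / t) = 1"
      using \<open>t\<^sup>2 = L f\<close> \<open>L f > 0\<close> by (simp add: L_def power_divide sum_divide_distrib[symmetric])
    moreover have "Q (\<lambda>i. f i / t) = Q f / L f"
      using \<open>t\<^sup>2 = L f\<close> by (simp add: Q_def sum_divide_distrib power2_eq_square)
    moreover have "c \<le> Q (\<lambda>i. f i / t)" if "L (\<lambda>i. f i / t) = 1"
      using min that unfolding Q_def L_def .
    ultimately have "c \<le> Q f / L f"
      by simp
    then show ?thesis
      using \<open>L f > 0\<close> by (simp add: L_def Q_def pos_le_divide_eq mult.commute)
  qed
qed

lemma quadratic_form_attains_min_on_sphere:
  fixes N :: "nat \<Rightarrow> nat \<Rightarrow> real"
  assumes "n > 0"
  shows "\<exists>v. (\<Sum>i<n. (v i)\<^sup>2) = 1 \<and> (\<forall>g. (\<Sum>i<n. (g i)\<^sup>2) = 1 \<longrightarrow>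
           (\<Sum>i<n. \<Sum>j<n. v i * N i j * v j) \<le> (\<Sum>i<n. \<Sum>j<n. g i * N i j * g j))"
proof -
  define Q where "Q f = (\<Sum>i<n. \<Sum>j<n. f i * N i j * f j)" for f :: "nat \<Rightarrow> real"
  define L where "L f = (\<Sum>i<n. (f i)\<^sup>2)" for f :: "nat \<Rightarrow> real"
  define K where "K = PiE UNIV (\<lambda>i::nat. if i < n then {-1..1} else {0::real}) \<inter> {f. L f = 1}"
  have "continuous_on UNIV L" and Q_cont: "continuous_on UNIV Q"
    unfolding L_def Q_def by (intro continuous_intros continuous_on_product_coordinates)+
  then have "compact K"
    unfolding K_def by (intro compact_Int_closed[OF compact_PiE_cube] closed_Collect_eq continuous_on_const)
  moreover have "continuous_on K Q"
    using Q_cont by (rule continuous_on_subset) simp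
  moreover have "(\<lambda>i. if i = 0 then 1 else 0) \<in> K"
    using \<open>n > 0\<close> by (simp add: K_def L_def PiE_iff if_distrib[of "\<lambda>x. x\<^sup>2"] sum.If_cases)
  ultimately obtain v where "v \<in> K" and v_min: "\<And>g. g \<in> K \<Longrightarrow> Q v \<le> Q g"
    using continuous_attains_inf[of K Q] by blast
  have "Q v \<le> Q g" if "L g = 1" for g
  proof -
    define g' where "g' i = (if i < n then g i else 0)" for i
    have "g i \<in> {-1..1}" if "i < n" for i
    proof -
      have "(g i)\<^sup>2 \<le> L g"
        unfolding L_def by (rule member_le_sum) (use that in auto)
      then show ?thesis
        using \<open>L g = 1\<close> abs_square_le_1[of "g i"] by (simp add: abs_le_iff)
    qed
    moreover have "L g' = L g" "Q g' = Q g"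
      by (simp_all add: L_def Q_def g'_def)
    ultimately have "g' \<in> K"
      using \<open>L g = 1\<close> by (simp add: K_def PiE_iff g'_def)
    then show ?thesis
      using v_min[of g'] \<open>Q g' = Q g\<close> by simp
  qed
  moreover have "L v = 1"
    using \<open>v \<in> K\<close> by (simp add: K_def)
  ultimately show ?thesis
    unfolding Q_def L_def by blast
qed

text \<open>Perturb \<open>v\<close> along the residual \<open>z = N v - c v\<close>: minimality yields a quadratic
  in the step size that is non-negative everywhere, so its linear coefficient, the squared
  norm of \<open>z\<close>, vanishes.\<close>

lemma quadratic_form_minimizer_is_eigenvector:
  fixes N :: "nat \<Rightarrow> nat \<Rightarrow> real"
  assumes sym: "\<And>i j. i < n \<Longrightarrow> j < n \<Longrightarrow> N i j = N j i"
    and ge: "\<And>f. c * (\<Sum>i<n. (f i)\<^sup>2) \<le> (\<Sum>i<n. \<Sum>j<n. f i * N i j * f j)"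
    and eq: "(\<Sum>i<n. \<Sum>j<n. v i * N i j * v j) = c * (\<Sum>i<n. (v i)\<^sup>2)"
    and "i < n"
  shows "(\<Sum>j<n. N i j * v j) = c * v i"
proof -
  define Q where "Q f = (\<Sum>i<n. \<Sum>j<n. f i * N i j * f j)" for f :: "nat \<Rightarrow> real"
  define L where "L f = (\<Sum>i<n. (f i)\<^sup>2)" for f :: "nat \<Rightarrow> real"
  define z where "z i = (\<Sum>j<n. N i j * v j) - c * v i" for i
  have ge': "c * L f \<le> Q f" for f
    using ge unfolding Q_def L_def .
  have "0 \<le> 2 * s * L z + s\<^sup>2 * (Q z - c * L z)" for s
  proof -
    define y where "y = (\<Sum>i<n. z i * v i)"
    have "(\<Sum>j<n. N i j * v j) = z i + c * v i" for i
      by (simp add: z_def)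
    then have "(\<Sum>i<n. z i * (\<Sum>j<n. N i j * v j)) = L z + c * y"
      by (simp add: L_def y_def power2_eq_square sum.distrib sum_distrib_left algebra_simps)
    then have "Q (\<lambda>i. v i + s * z i) = Q v + 2 * s * (L z + c * y) + s\<^sup>2 * Q z"
      unfolding Q_def by (subst quadratic_form_add_scaled[OF sym]) simp_all
    moreover have "L (\<lambda>i. v i + s * z i) = L v + 2 * s * y + s\<^sup>2 * L z"
      by (simp add: L_def y_def power2_sum sum.distrib sum_distrib_left power_mult_distrib algebra_simps)
    ultimately have "c * (L v + 2 * s * y + s\<^sup>2 * L z) \<le> Q v + 2 * s * (L z + c * y) + s\<^sup>2 * Q z"
      using ge'[of "\<lambda>i. v i + s * z i"] by simp
    moreover have "Q v = c * L v"
      using eq unfolding Q_def L_def .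
    ultimately show ?thesis
      by (simp add: algebra_simps)
  qed
  then have "L z = 0"
    by (rule nonneg_quadratic_linear_coeff_eq_0[rotated]) (use ge'[of z] in simp)
  then have "z i = 0"
    using \<open>i < n\<close> by (simp add: L_def sum_nonneg_eq_0_iff)
  then show ?thesis
    by (simp add: z_def)
qed

lemma scalar_prod_self_eq_sum:
  "(y::real vec) \<in> carrier_vec n \<Longrightarrow> y \<bullet> y = (\<Sum>i<n. (y $ i)\<^sup>2)"
  unfolding scalar_prod_def power2_eq_square by (simp add: atLeast0LessThan)

lemma scalar_prod_self_nonneg: "(y::real vec) \<bullet> y \<ge> 0"
  unfolding scalar_prod_def by (intro sum_nonneg) auto

lemma scalar_prod_self_pos:
  assumes "(y::real vec) \<in> carrier_vec n" and "y \<noteq> 0\<^sub>v n"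
  shows "y \<bullet> y > 0"
proof (rule ccontr)
  assume "\<not> y \<bullet> y > 0"
  then have "\<forall>i<n. y $ i = 0"
    using scalar_prod_self_eq_sum[OF assms(1)] scalar_prod_self_nonneg[of y]
    by (simp add: sum_nonneg_eq_0_iff)
  then have "y = 0\<^sub>v n"
    using assms(1) by (intro eq_vecI) auto
  with assms(2) show False ..
qed

lemma scalar_prod_mult_mat_vec_eq_sum:
  assumes "N \<in> carrier_mat n n" and "y \<in> carrier_vec n"
  shows "y \<bullet> (N *\<^sub>v y) = (\<Sum>i<n. \<Sum>j<n. y $ i * N $$ (i, j) * y $ j)"
  using assms by (simp add: scalar_prod_def atLeast0LessThan sum_distrib_left mult.assoc)

lemma scalar_prod_le_of_rayleigh:
  fixes x y :: "real vec"
  assumes x: "x \<in> carrier_vec n" and y: "y \<in> carrier_vec n"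
    and "0 \<le> \<mu>" and rayleigh: "\<mu> * (y \<bullet> y) \<le> y \<bullet> x"
  shows "\<mu> * (y \<bullet> x) \<le> x \<bullet> x"
proof -
  have square: "(\<mu> * y $ i - x $ i)\<^sup>2 = \<mu>\<^sup>2 * (y $ i)\<^sup>2 - 2 * \<mu> * (y $ i * x $ i) + (x $ i)\<^sup>2" for i
    by (simp add: power2_diff power_mult_distrib algebra_simps)
  have yx: "y \<bullet> x = (\<Sum>i<n. y $ i * x $ i)"
    using x unfolding scalar_prod_def by (simp add: atLeast0LessThan)
  have "0 \<le> (\<Sum>i<n. (\<mu> * y $ i - x $ i)\<^sup>2)"
    by (intro sum_nonneg) auto
  also have "\<dots> = \<mu>\<^sup>2 * (y \<bullet> y) - 2 * \<mu> * (y \<bullet> x) + x \<bullet> x"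
    unfolding square sum.distrib sum_subtractf sum_distrib_left[symmetric] yx
      scalar_prod_self_eq_sum[OF y] scalar_prod_self_eq_sum[OF x] ..
  finally have "0 \<le> \<mu>\<^sup>2 * (y \<bullet> y) - 2 * \<mu> * (y \<bullet> x) + x \<bullet> x" .
  moreover have "\<mu>\<^sup>2 * (y \<bullet> y) \<le> \<mu> * (y \<bullet> x)"
    using mult_left_mono[OF rayleigh \<open>0 \<le> \<mu>\<close>] by (simp add: power2_eq_square mult.assoc)
  ultimately show ?thesis
    by linarith
qed

lemma finite_eigenvalues:
  fixes N :: "real mat"
  assumes "N \<in> carrier_mat n n"
  shows "finite {c. eigenvalue N c}"
proof -
  have "char_poly N \<noteq> 0"
    using degree_monic_char_poly[OF assms] by auto
  then show ?thesis
    using poly_roots_finite eigenvalue_root_char_poly[OF assms] by simp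
qed

lemma symmetric_mat_rayleigh_eigenvalue:
  fixes N :: "real mat"
  assumes N: "N \<in> carrier_mat n n" and "n > 0" and sym: "N\<^sup>T = N"
  obtains c where "eigenvalue N c" and "\<And>y. y \<in> carrier_vec n \<Longrightarrow> c * (y \<bullet> y) \<le> y \<bullet> (N *\<^sub>v y)"
proof -
  have N_sym: "N $$ (i, j) = N $$ (j, i)" if "i < n" "j < n" for i j
    using that N by (metis carrier_matD index_transpose_mat(1) sym)
  obtain v where v_norm: "(\<Sum>i<n. (v i)\<^sup>2) = 1"
    and v_min: "\<And>g. (\<Sum>i<n. (g i)\<^sup>2) = 1 \<Longrightarrow> (\<Sum>i<n. \<Sum>j<n. v i * N $$ (i, j) * v j)
                       \<le> (\<Sum>i<n. \<Sum>j<n. g i * N $$ (i, j) * g j)"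
    using quadratic_form_attains_min_on_sphere[OF \<open>n > 0\<close>, where N = "\<lambda>i j. N $$ (i, j)"] by blast
  define c where "c = (\<Sum>i<n. \<Sum>j<n. v i * N $$ (i, j) * v j)"
  have c_min: "c * (\<Sum>i<n. (f i)\<^sup>2) \<le> (\<Sum>i<n. \<Sum>j<n. f i * N $$ (i, j) * f j)" for f
    by (rule quadratic_form_ge_of_unit_sphere) (use v_min in \<open>simp add: c_def\<close>)
  define w where "w = vec n v"
  have "w \<noteq> 0\<^sub>v n"
  proof
    assume "w = 0\<^sub>v n"
    then have "\<forall>i<n. v i = 0"
      by (metis w_def index_vec index_zero_vec(1))
    then show False
      using v_norm by simp
  qed
  moreover have "N *\<^sub>v w = c \<cdot>\<^sub>v w"
  proof (rule eq_vecI)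
    fix i assume "i < dim_vec (c \<cdot>\<^sub>v w)"
    then have "i < n" by (simp add: w_def)
    have "(\<Sum>j<n. N $$ (i, j) * v j) = c * v i"
      by (rule quadratic_form_minimizer_is_eigenvector[OF N_sym])
        (use c_min v_norm \<open>i < n\<close> in \<open>simp_all add: c_def\<close>)
    then show "(N *\<^sub>v w) $ i = (c \<cdot>\<^sub>v w) $ i"
      using N \<open>i < n\<close> by (simp add: w_def scalar_prod_def atLeast0LessThan)
  qed (use N in \<open>simp add: w_def\<close>)
  moreover have "w \<in> carrier_vec n"
    by (simp add: w_def)
  ultimately have "eigenvalue N c"
    using N unfolding eigenvalue_def eigenvector_def by blast
  moreover have "c * (y \<bullet> y) \<le> y \<bullet> (N *\<^sub>v y)" if y: "y \<in> carrier_vec n" for y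
    using c_min[of "\<lambda>i. y $ i"]
    by (simp add: scalar_prod_self_eq_sum[OF y] scalar_prod_mult_mat_vec_eq_sum[OF N y])
  ultimately show ?thesis
    using that by blast
qed

text \<open>The first conclusion matters because the minimum of an empty set is unspecified.\<close>

lemma symmetric_min_eigenvalue:
  fixes N :: "real mat"
  assumes N: "N \<in> carrier_mat n n" and "n > 0" and sym: "N\<^sup>T = N"
  shows "eigenvalue N (Min {c. eigenvalue N c})"
    and "\<And>y. y \<in> carrier_vec n \<Longrightarrow> Min {c. eigenvalue N c} * (y \<bullet> y) \<le> y \<bullet> (N *\<^sub>v y)"
proof -
  obtain c where c: "eigenvalue N c" and c_min: "\<And>y. y \<in> carrier_vec n \<Longrightarrow> c * (y \<bullet> y) \<le> y \<bullet> (N *\<^sub>v y)"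
    using symmetric_mat_rayleigh_eigenvalue[OF assms] by blast
  show "eigenvalue N (Min {c. eigenvalue N c})"
    using Min_in[OF finite_eigenvalues[OF N]] c by blast
  fix y :: "real vec" assume y: "y \<in> carrier_vec n"
  have "Min {c. eigenvalue N c} \<le> c"
    using finite_eigenvalues[OF N] c by simp
  then have "Min {c. eigenvalue N c} * (y \<bullet> y) \<le> c * (y \<bullet> y)"
    using scalar_prod_self_nonneg by (rule mult_right_mono)
  also have "\<dots> \<le> y \<bullet> (N *\<^sub>v y)"
    by (rule c_min[OF y])
  finally show "Min {c. eigenvalue N c} * (y \<bullet> y) \<le> y \<bullet> (N *\<^sub>v y)" .
qed


section \<open>Singular values and Gram matrices\<close>

lemma eigenvalue_mult_commute:
  fixes X Y :: "real mat"
  assumes X: "X \<in> carrier_mat a b" and Y: "Y \<in> carrier_mat b a"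
    and "eigenvalue (X * Y) c" and "c \<noteq> 0"
  shows "eigenvalue (Y * X) c"
proof -
  obtain v where v: "v \<in> carrier_vec a" "v \<noteq> 0\<^sub>v a" "(X * Y) *\<^sub>v v = c \<cdot>\<^sub>v v"
    using assms(3) X Y unfolding eigenvalue_def eigenvector_def by auto
  have XYv: "X *\<^sub>v (Y *\<^sub>v v) = c \<cdot>\<^sub>v v"
    using v X Y by (simp add: assoc_mult_mat_vec[of _ a b _ a])
  have "Y *\<^sub>v v \<noteq> 0\<^sub>v b"
  proof
    assume "Y *\<^sub>v v = 0\<^sub>v b"
    moreover have "X *\<^sub>v 0\<^sub>v b = 0\<^sub>v a"
      using X by (intro eq_vecI) auto
    ultimately have "c \<cdot>\<^sub>v v = 0\<^sub>v a"
      using XYv by simp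
    then have "v = 0\<^sub>v a"
      using \<open>c \<noteq> 0\<close> v(1) by (intro eq_vecI) (auto simp: vec_eq_iff)
    with v(2) show False ..
  qed
  moreover have "(Y * X) *\<^sub>v (Y *\<^sub>v v) = c \<cdot>\<^sub>v (Y *\<^sub>v v)"
    using v X Y XYv by (simp add: assoc_mult_mat_vec[of _ b a _ b] mult_mat_vec)
  moreover have "Y *\<^sub>v v \<in> carrier_vec b" "dim_row (Y * X) = b"
    using Y unfolding carrier_vec_def by auto
  ultimately have "eigenvector (Y * X) (Y *\<^sub>v v) c"
    unfolding eigenvector_def by simp
  then show ?thesis
    unfolding eigenvalue_def ..
qed

lemma eigenvalue_0_iff_det:
  fixes N :: "real mat"
  assumes "N \<in> carrier_mat n n"
  shows "eigenvalue N 0 \<longleftrightarrow> det N = 0"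
proof -
  have "0 \<cdot>\<^sub>v v = 0\<^sub>v n" if "v \<in> carrier_vec n" for v :: "real vec"
    using that by (intro eq_vecI) auto
  moreover have "dim_row N = n"
    using assms by simp
  ultimately have "eigenvector N v 0 \<longleftrightarrow> v \<in> carrier_vec n \<and> v \<noteq> 0\<^sub>v n \<and> N *\<^sub>v v = 0\<^sub>v n" for v
    unfolding eigenvector_def by metis
  then show ?thesis
    unfolding eigenvalue_def det_0_iff_vec_prod_zero[OF assms] by blast
qed

lemma square_gram_eigenvalues_eq:
  fixes M :: "real mat"
  assumes M: "M \<in> carrier_mat n n"
  shows "eigenvalue (M * M\<^sup>T) c \<longleftrightarrow> eigenvalue (M\<^sup>T * M) c"
proof -
  have Mt: "M\<^sup>T \<in> carrier_mat n n"
    using M by simp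
  show ?thesis
  proof (cases "c = 0")
    case True
    have "det (M * M\<^sup>T) = det M * det M" "det (M\<^sup>T * M) = det M * det M"
      using det_mult[OF M Mt] det_mult[OF Mt M] det_transpose[OF M] by simp_all
    then show ?thesis
      using True eigenvalue_0_iff_det[OF mult_carrier_mat[OF M Mt]]
        eigenvalue_0_iff_det[OF mult_carrier_mat[OF Mt M]] by simp
  next
    case False
    then show ?thesis
      using eigenvalue_mult_commute[OF M Mt] eigenvalue_mult_commute[OF Mt M] by blast
  qed
qed

lemma sigma_min_transpose: "sigma_min (M\<^sup>T) = sigma_min M"
proof (cases "dim_row M = dim_col M")
  case True
  then have "M \<in> carrier_mat (dim_row M) (dim_row M)"
    unfolding carrier_mat_def by simp
  then have "{c. eigenvalue (M * M\<^sup>T) c} = {c. eigenvalue (M\<^sup>T * M) c}"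
    using square_gram_eigenvalues_eq by blast
  then show ?thesis
    using True unfolding sigma_min_def by simp
next
  case False
  then show ?thesis
    by (cases "dim_row M < dim_col M") (simp_all add: sigma_min_def)
qed

lemma gram_mat_sym:
  fixes A :: "'a :: comm_semiring_0 mat"
  assumes "A \<in> carrier_mat m k"
  shows "(A * A\<^sup>T)\<^sup>T = A * A\<^sup>T"
  using transpose_mult[of A m k "A\<^sup>T" m] assms by simp

lemma scalar_prod_gram_mat:
  fixes A :: "real mat"
  assumes A: "A \<in> carrier_mat m k" and y: "y \<in> carrier_vec m"
  shows "y \<bullet> ((A * A\<^sup>T) *\<^sub>v y) = (A\<^sup>T *\<^sub>v y) \<bullet> (A\<^sup>T *\<^sub>v y)"
proof -
  have "A\<^sup>T *\<^sub>v y \<in> carrier_vec k"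
    using A unfolding carrier_vec_def by auto
  then have "(A\<^sup>T *\<^sub>v y) \<bullet> (A\<^sup>T *\<^sub>v y) = y \<bullet> (A *\<^sub>v (A\<^sup>T *\<^sub>v y))"
    using transpose_vec_mult_scalar[OF A _ y, of "A\<^sup>T *\<^sub>v y"] by simp
  moreover have "(A * A\<^sup>T) *\<^sub>v y = A *\<^sub>v (A\<^sup>T *\<^sub>v y)"
    using A y by (simp add: assoc_mult_mat_vec[of _ m k _ m])
  ultimately show ?thesis
    by simp
qed

lemma gram_mat_inverse:
  fixes A :: "real mat"
  assumes A: "A \<in> carrier_mat m k"
    and inj: "\<And>y. y \<in> carrier_vec m \<Longrightarrow> A\<^sup>T *\<^sub>v y = 0\<^sub>v k \<Longrightarrow> y = 0\<^sub>v m"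
  shows "minv (A * A\<^sup>T) \<in> carrier_mat m m"
    and "A * A\<^sup>T * minv (A * A\<^sup>T) = 1\<^sub>m m"
    and "minv (A * A\<^sup>T) * (A * A\<^sup>T) = 1\<^sub>m m"
proof -
  have N: "A * A\<^sup>T \<in> carrier_mat m m"
    using A by simp
  have "det (A * A\<^sup>T) \<noteq> 0"
  proof
    assume "det (A * A\<^sup>T) = 0"
    then obtain y where y: "y \<in> carrier_vec m" "y \<noteq> 0\<^sub>v m" "(A * A\<^sup>T) *\<^sub>v y = 0\<^sub>v m"
      using det_0_iff_vec_prod_zero[OF N] by auto
    have "A\<^sup>T *\<^sub>v y \<in> carrier_vec k"
      using A unfolding carrier_vec_def by auto
    moreover have "(A\<^sup>T *\<^sub>v y) \<bullet> (A\<^sup>T *\<^sub>v y) = 0"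
      using scalar_prod_gram_mat[OF A y(1)] y(1,3) by simp
    ultimately have "A\<^sup>T *\<^sub>v y = 0\<^sub>v k"
      using scalar_prod_self_pos by fastforce
    with inj y show False by blast
  qed
  then have "A * A\<^sup>T \<in> Units (ring_mat TYPE(real) m ())"
    by (rule det_non_zero_imp_unit[OF N])
  then obtain X where X: "mat_inverse (A * A\<^sup>T) = Some X"
    using mat_inverse(1)[OF N, where b = "()"] by (cases "mat_inverse (A * A\<^sup>T)") auto
  then have "minv (A * A\<^sup>T) = X"
    by (simp add: minv_def)
  then show "minv (A * A\<^sup>T) \<in> carrier_mat m m"
    and "A * A\<^sup>T * minv (A * A\<^sup>T) = 1\<^sub>m m"
    and "minv (A * A\<^sup>T) * (A * A\<^sup>T) = 1\<^sub>m m"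
    using mat_inverse(2)[OF N X] by simp_all
qed

lemma inverse_of_sym_mat_sym:
  fixes N X :: "real mat"
  assumes N: "N \<in> carrier_mat m m" and X: "X \<in> carrier_mat m m"
    and sym: "N\<^sup>T = N" and NX: "N * X = 1\<^sub>m m"
  shows "X\<^sup>T = X"
proof -
  have "X\<^sup>T * N = 1\<^sub>m m"
    using transpose_mult[OF N X] NX sym by simp
  have "X\<^sup>T = X\<^sup>T * (N * X)"
    using NX X by simp
  also have "\<dots> = (X\<^sup>T * N) * X"
    using X N by (simp add: assoc_mult_mat[of "X\<^sup>T" m m N m X m])
  also have "\<dots> = X"
    using \<open>X\<^sup>T * N = 1\<^sub>m m\<close> X by simp
  finally show ?thesis .
qed


section \<open>Frobenius norm and one-sided inverses\<close>

lemma frob_norm_eq_sqrt_sum_cols: "frob_norm M = sqrt (\<Sum>j<dim_col M. col M j \<bullet> col M j)"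
proof -
  have "(\<Sum>i<dim_row M. \<Sum>j<dim_col M. (M $$ (i, j))\<^sup>2) = (\<Sum>j<dim_col M. \<Sum>i<dim_row M. (M $$ (i, j))\<^sup>2)"
    by (rule sum.swap)
  also have "\<dots> = (\<Sum>j<dim_col M. col M j \<bullet> col M j)"
    by (intro sum.cong refl) (simp add: scalar_prod_self_eq_sum[of _ "dim_row M"])
  finally show ?thesis
    by (simp add: frob_norm_def)
qed

lemma frob_norm_nonneg: "frob_norm M \<ge> 0"
  unfolding frob_norm_def by (intro real_sqrt_ge_zero sum_nonneg) auto

lemma frob_norm_transpose: "frob_norm (M\<^sup>T) = frob_norm M"
  unfolding frob_norm_def by (simp add: sum.swap[of _ "{..<dim_row M}"])

lemma frob_norm_mult_le:
  assumes P: "P \<in> carrier_mat k m" and Y: "Y \<in> carrier_mat m p" and "c \<ge> 0"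
    and bound: "\<And>x. x \<in> carrier_vec m \<Longrightarrow> (P *\<^sub>v x) \<bullet> (P *\<^sub>v x) \<le> c\<^sup>2 * (x \<bullet> x)"
  shows "frob_norm (P * Y) \<le> c * frob_norm Y"
proof -
  have "(\<Sum>j<p. col (P * Y) j \<bullet> col (P * Y) j) = (\<Sum>j<p. (P *\<^sub>v col Y j) \<bullet> (P *\<^sub>v col Y j))"
    using col_mult2[OF P Y] by (intro sum.cong refl) simp
  also have "\<dots> \<le> (\<Sum>j<p. c\<^sup>2 * (col Y j \<bullet> col Y j))"
    by (intro sum_mono bound) (use Y in simp)
  finally have "(\<Sum>j<p. col (P * Y) j \<bullet> col (P * Y) j) \<le> c\<^sup>2 * (\<Sum>j<p. col Y j \<bullet> col Y j)"
    by (simp add: sum_distrib_left)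
  then have "frob_norm (P * Y) \<le> sqrt (c\<^sup>2 * (\<Sum>j<p. col Y j \<bullet> col Y j))"
    using P Y by (simp add: frob_norm_eq_sqrt_sum_cols)
  also have "\<dots> = c * frob_norm Y"
    using Y \<open>c \<ge> 0\<close> by (simp add: frob_norm_eq_sqrt_sum_cols real_sqrt_mult)
  finally show ?thesis .
qed

definition right_inverse_mat :: "real mat \<Rightarrow> real mat" where
  "right_inverse_mat A = A\<^sup>T * minv (A * A\<^sup>T)"

definition left_inverse_mat :: "real mat \<Rightarrow> real mat" where
  "left_inverse_mat B = minv (B\<^sup>T * B) * B\<^sup>T"

context
  fixes A :: "real mat" and m k :: nat
  assumes A: "A \<in> carrier_mat m k"
    and inj: "\<And>y. y \<in> carrier_vec m \<Longrightarrow> A\<^sup>T *\<^sub>v y = 0\<^sub>v k \<Longrightarrow> y = 0\<^sub>v m"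
begin

lemma right_inverse_mat_carrier: "right_inverse_mat A \<in> carrier_mat k m"
  unfolding right_inverse_mat_def
  by (rule mult_carrier_mat[OF _ gram_mat_inverse(1)[OF A inj]]) (use A in simp)

lemma mult_right_inverse_mat: "A * right_inverse_mat A = 1\<^sub>m m"
proof -
  have "A * right_inverse_mat A = A * A\<^sup>T * minv (A * A\<^sup>T)"
    unfolding right_inverse_mat_def
    by (rule assoc_mult_mat[symmetric, of _ m k _ m _ m]) (use A gram_mat_inverse(1)[OF A inj] in auto)
  then show ?thesis
    using gram_mat_inverse(2)[OF A inj] by simp
qed

lemma gram_min_eigenvalue_pos:
  assumes "m > 0"
  shows "Min {c. eigenvalue (A * A\<^sup>T) c} > 0"
proof -
  let ?\<mu> = "Min {c. eigenvalue (A * A\<^sup>T) c}"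
  have N: "A * A\<^sup>T \<in> carrier_mat m m"
    using A by simp
  obtain w where w: "w \<in> carrier_vec m" "w \<noteq> 0\<^sub>v m" "(A * A\<^sup>T) *\<^sub>v w = ?\<mu> \<cdot>\<^sub>v w"
    using symmetric_min_eigenvalue(1)[OF N \<open>m > 0\<close> gram_mat_sym[OF A]] N
    unfolding eigenvalue_def eigenvector_def by auto
  have "A\<^sup>T *\<^sub>v w \<in> carrier_vec k"
    using A unfolding carrier_vec_def by auto
  moreover have "A\<^sup>T *\<^sub>v w \<noteq> 0\<^sub>v k"
    using inj w(1,2) by blast
  ultimately have "0 < w \<bullet> ((A * A\<^sup>T) *\<^sub>v w)"
    using scalar_prod_gram_mat[OF A w(1)] scalar_prod_self_pos by simp
  also have "w \<bullet> ((A * A\<^sup>T) *\<^sub>v w) = ?\<mu> * (w \<bullet> w)"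
    using w by simp
  finally show ?thesis
    using scalar_prod_self_nonneg[of w] by (simp add: zero_less_mult_iff)
qed

text \<open>With \<open>y = (A A\<^sup>T)\<^sup>-\<^sup>1 x\<close> the squared norm of \<open>A\<^sup>T y\<close> is \<open>y \<bullet> x\<close>, and the Rayleigh bound
  for \<open>A A\<^sup>T\<close> at \<open>y\<close> is exactly the hypothesis of \<open>scalar_prod_le_of_rayleigh\<close>.\<close>

lemma right_inverse_mat_norm_le:
  assumes "x \<in> carrier_vec m"
  shows "Min {c. eigenvalue (A * A\<^sup>T) c} * ((right_inverse_mat A *\<^sub>v x) \<bullet> (right_inverse_mat A *\<^sub>v x))
           \<le> x \<bullet> x"
proof (cases "m = 0")
  case True
  then have "right_inverse_mat A *\<^sub>v x = 0\<^sub>v k"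
    using right_inverse_mat_carrier assms by (intro eq_vecI) (auto simp: scalar_prod_def)
  then show ?thesis
    using True assms by (simp add: scalar_prod_def)
next
  case False
  let ?\<mu> = "Min {c. eigenvalue (A * A\<^sup>T) c}"
  have N: "A * A\<^sup>T \<in> carrier_mat m m"
    using A by simp
  note inv = gram_mat_inverse[OF A inj]
  define y where "y = minv (A * A\<^sup>T) *\<^sub>v x"
  define s where "s = y \<bullet> x"
  have y: "y \<in> carrier_vec m"
    using inv(1) assms by (simp add: y_def)
  have Ny: "(A * A\<^sup>T) *\<^sub>v y = x"
    using N inv assms by (simp add: y_def assoc_mult_mat_vec[symmetric, of _ m m _ m])
  have "right_inverse_mat A *\<^sub>v x = A\<^sup>T *\<^sub>v y"
    using A inv(1) assms by (simp add: right_inverse_mat_def y_def assoc_mult_mat_vec[of _ k m _ m])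
  then have norm_eq: "(right_inverse_mat A *\<^sub>v x) \<bullet> (right_inverse_mat A *\<^sub>v x) = s"
    using scalar_prod_gram_mat[OF A y] Ny by (simp add: s_def)
  have "?\<mu> * (y \<bullet> y) \<le> y \<bullet> x"
    using symmetric_min_eigenvalue(2)[OF N _ gram_mat_sym[OF A] y] False Ny by simp
  then have "?\<mu> * s \<le> x \<bullet> x"
    unfolding s_def
    by (rule scalar_prod_le_of_rayleigh[OF assms y, rotated]) (use gram_min_eigenvalue_pos False in simp)
  then show ?thesis
    using norm_eq by simp
qed

lemma sigma_min_pos:
  assumes "0 < m" "m \<le> k"
  shows "sigma_min A > 0"
  using A assms gram_min_eigenvalue_pos by (simp add: sigma_min_def)

lemma frob_norm_right_inverse_mult_le:
  assumes "m \<le> k" and Y: "Y \<in> carrier_mat m p"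
  shows "frob_norm (right_inverse_mat A * Y) \<le> frob_norm Y / sigma_min A"
proof (cases "m = 0")
  case True
  then have "frob_norm (right_inverse_mat A * Y) = 0"
    using right_inverse_mat_carrier Y by (simp add: frob_norm_def scalar_prod_def)
  moreover have "frob_norm Y = 0"
    using True Y by (simp add: frob_norm_def)
  ultimately show ?thesis
    by simp
next
  case False
  let ?\<mu> = "Min {c. eigenvalue (A * A\<^sup>T) c}"
  have "?\<mu> > 0"
    using gram_min_eigenvalue_pos False by simp
  have "sigma_min A = sqrt ?\<mu>"
    using A \<open>m \<le> k\<close> by (simp add: sigma_min_def)
  have "frob_norm (right_inverse_mat A * Y) \<le> (1 / sqrt ?\<mu>) * frob_norm Y"
  proof (rule frob_norm_mult_le[OF right_inverse_mat_carrier Y])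
    fix x :: "real vec" assume "x \<in> carrier_vec m"
    then show "(right_inverse_mat A *\<^sub>v x) \<bullet> (right_inverse_mat A *\<^sub>v x) \<le> (1 / sqrt ?\<mu>)\<^sup>2 * (x \<bullet> x)"
      using right_inverse_mat_norm_le \<open>?\<mu> > 0\<close> by (simp add: power_divide pos_le_divide_eq mult.commute)
  qed (use \<open>?\<mu> > 0\<close> in simp)
  then show ?thesis
    using \<open>sigma_min A = sqrt ?\<mu>\<close> by simp
qed

end

lemma
  fixes B :: "real mat"
  assumes B: "B \<in> carrier_mat q p"
    and inj: "\<And>v. v \<in> carrier_vec p \<Longrightarrow> B *\<^sub>v v = 0\<^sub>v q \<Longrightarrow> v = 0\<^sub>v p"
  shows left_inverse_mat_eq_transpose: "left_inverse_mat B = (right_inverse_mat (B\<^sup>T))\<^sup>T"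
    and left_inverse_mat_carrier: "left_inverse_mat B \<in> carrier_mat p q"
    and left_inverse_mat_mult: "left_inverse_mat B * B = 1\<^sub>m p"
proof -
  have Bt: "B\<^sup>T \<in> carrier_mat p q"
    using B by simp
  have inj_t: "\<And>v. v \<in> carrier_vec p \<Longrightarrow> (B\<^sup>T)\<^sup>T *\<^sub>v v = 0\<^sub>v q \<Longrightarrow> v = 0\<^sub>v p"
    using inj by simp
  note inv = gram_mat_inverse[OF Bt inj_t]
  have "(minv (B\<^sup>T * B))\<^sup>T = minv (B\<^sup>T * B)"
    using inverse_of_sym_mat_sym[OF _ inv(1) gram_mat_sym[OF Bt] inv(2)] Bt by simp
  then show eq: "left_inverse_mat B = (right_inverse_mat (B\<^sup>T))\<^sup>T"
    using B inv(1) by (simp add: left_inverse_mat_def right_inverse_mat_def transpose_mult[of B q p _ p])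
  show "left_inverse_mat B \<in> carrier_mat p q"
    unfolding eq using right_inverse_mat_carrier[OF Bt inj_t] by simp
  have "(B\<^sup>T * right_inverse_mat (B\<^sup>T))\<^sup>T = 1\<^sub>m p"
    using mult_right_inverse_mat[OF Bt inj_t] by simp
  then show "left_inverse_mat B * B = 1\<^sub>m p"
    unfolding eq using transpose_mult[OF Bt right_inverse_mat_carrier[OF Bt inj_t]] by simp
qed

lemma frob_norm_mult_left_inverse_le:
  fixes B :: "real mat"
  assumes B: "B \<in> carrier_mat q p" and "p \<le> q"
    and inj: "\<And>v. v \<in> carrier_vec p \<Longrightarrow> B *\<^sub>v v = 0\<^sub>v q \<Longrightarrow> v = 0\<^sub>v p"
    and Y: "Y \<in> carrier_mat n p"
  shows "frob_norm (Y * left_inverse_mat B) \<le> frob_norm Y / sigma_min B"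
proof -
  have Bt: "B\<^sup>T \<in> carrier_mat p q"
    using B by simp
  have inj_t: "\<And>v. v \<in> carrier_vec p \<Longrightarrow> (B\<^sup>T)\<^sup>T *\<^sub>v v = 0\<^sub>v q \<Longrightarrow> v = 0\<^sub>v p"
    using inj by simp
  have L: "left_inverse_mat B \<in> carrier_mat p q"
    by (rule left_inverse_mat_carrier[OF B]) (rule inj)
  have "left_inverse_mat B = (right_inverse_mat (B\<^sup>T))\<^sup>T"
    by (rule left_inverse_mat_eq_transpose[OF B]) (rule inj)
  then have "(Y * left_inverse_mat B)\<^sup>T = right_inverse_mat (B\<^sup>T) * Y\<^sup>T"
    using transpose_mult[OF Y L] by simp
  then have "frob_norm (Y * left_inverse_mat B) = frob_norm (right_inverse_mat (B\<^sup>T) * Y\<^sup>T)"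
    by (metis frob_norm_transpose)
  also have "\<dots> \<le> frob_norm (Y\<^sup>T) / sigma_min (B\<^sup>T)"
    by (rule frob_norm_right_inverse_mult_le[OF Bt]) (fact inj_t, fact \<open>p \<le> q\<close>, use Y in simp)
  finally show ?thesis
    by (simp add: frob_norm_transpose sigma_min_transpose)
qed


section \<open>Full rank\<close>

lemma maximal_lin_indpt_cols_exists:
  "\<exists>S. maximal S (\<lambda>T. T \<subseteq> set (cols (A::real mat))
                     \<and> \<not> module.lin_dep class_ring (module_vec TYPE(real) n) T)"
proof -
  interpret vec_space "TYPE(real)" n .
  show ?thesis
    using maximal_exists[of "\<lambda>T. T \<subseteq> set (cols A) \<and> \<not> lin_dep T" "card (set (cols A))" "{}"]
    by (meson List.finite_set card_mono empty_iff empty_subsetI finite_lin_indpt2 rev_finite_subset)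
qed

lemma full_row_rank_imp_le:
  assumes A: "(A::real mat) \<in> carrier_mat m k" and "full_row_rank A"
  shows "m \<le> k"
proof -
  interpret vec_space "TYPE(real)" m .
  have "rank A = m"
    using assms unfolding full_row_rank_def mat_rank_def by simp
  then show ?thesis
    using rank_le_nc[OF A] by simp
qed

lemma full_col_rank_imp_le:
  assumes B: "(B::real mat) \<in> carrier_mat q p" and "full_col_rank B"
  shows "p \<le> q"
proof -
  interpret vec_space "TYPE(real)" q .
  obtain S where S: "maximal S (\<lambda>T. T \<subseteq> set (cols B) \<and> \<not> lin_dep T)"
    using maximal_lin_indpt_cols_exists by blast
  then have "S \<subseteq> set (cols B)" "\<not> lin_dep S"
    unfolding maximal_def by auto
  moreover from this(1) have "S \<subseteq> carrier_vec q"
    using B cols_dim by blast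
  ultimately have "card S \<le> dim"
    using li_le_dim(2)[OF fin_dim] by simp
  then show ?thesis
    using assms rank_card_indpt[OF B S] dim_is_n unfolding full_col_rank_def mat_rank_def by simp
qed

lemma full_col_rank_mult_vec_eq_0:
  assumes B: "(B::real mat) \<in> carrier_mat q p" and "full_col_rank B"
    and v: "v \<in> carrier_vec p" and Bv: "B *\<^sub>v v = 0\<^sub>v q"
  shows "v = 0\<^sub>v p"
proof (rule ccontr)
  interpret vec_space "TYPE(real)" q .
  assume "v \<noteq> 0\<^sub>v p"
  have rank: "rank B = p"
    using assms unfolding full_col_rank_def mat_rank_def by simp
  show False
  proof (cases "distinct (cols B)")
    case True
    then show False
      using full_rank_lin_indpt[OF B rank] lin_depI[OF B v \<open>v \<noteq> 0\<^sub>v p\<close> Bv] by blast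
  next
    case False
    obtain S where S: "maximal S (\<lambda>T. T \<subseteq> set (cols B) \<and> \<not> lin_dep T)"
      using maximal_lin_indpt_cols_exists by blast
    then have "card S \<le> card (set (cols B))"
      unfolding maximal_def by (simp add: card_mono)
    also have "\<dots> < length (cols B)"
      using False card_distinct card_length by (metis le_neq_implies_less)
    finally show False
      using rank_card_indpt[OF B S] rank B by simp
  qed
qed

lemma (in vec_space) lincomb_scalar_prod_eq_0:
  assumes X: "finite X" "X \<subseteq> carrier_vec n" and y: "y \<in> carrier_vec n"
    and orth: "\<And>x. x \<in> X \<Longrightarrow> x \<bullet> y = 0"
  shows "lincomb a X \<bullet> y = 0"
proof -
  have "lincomb a X \<bullet> y = (\<Sum>i<n. (\<Sum>x\<in>X. a x * x $ i) * y $ i)"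
    unfolding scalar_prod_def using y lincomb_index[OF _ X(2)] by (simp add: atLeast0LessThan)
  also have "\<dots> = (\<Sum>x\<in>X. a x * (\<Sum>i<n. x $ i * y $ i))"
    by (simp add: sum_distrib_left sum_distrib_right sum.swap[of _ X] mult.assoc)
  also have "\<dots> = (\<Sum>x\<in>X. a x * (x \<bullet> y))"
    using X(2) y by (intro sum.cong) (auto simp: scalar_prod_def atLeast0LessThan)
  also have "\<dots> = 0"
    using orth by simp
  finally show ?thesis .
qed

text \<open>The columns of a full-row-rank \<open>A\<close> span the whole space, and \<open>A\<^sup>T y = 0\<close> says that
  \<open>y\<close> is orthogonal to all of them, hence to itself.\<close>

lemma full_row_rank_transpose_mult_vec_eq_0:
  assumes A: "(A::real mat) \<in> carrier_mat m k" and "full_row_rank A"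
    and y: "y \<in> carrier_vec m" and Ay: "A\<^sup>T *\<^sub>v y = 0\<^sub>v k"
  shows "y = 0\<^sub>v m"
proof -
  interpret vec_space "TYPE(real)" m .
  have rank: "rank A = m"
    using assms unfolding full_row_rank_def mat_rank_def by simp
  obtain S where S: "maximal S (\<lambda>T. T \<subseteq> set (cols A) \<and> \<not> lin_dep T)"
    using maximal_lin_indpt_cols_exists by blast
  have SA: "S \<subseteq> set (cols A)" and li: "\<not> lin_dep S"
    using S unfolding maximal_def by auto
  have Sc: "S \<subseteq> carrier_vec m"
    using SA A cols_dim by blast
  have "basis S"
    by (rule dim_li_is_basis[OF fin_dim finite_subset[OF SA] _ li])
      (use Sc rank_card_indpt[OF A S] rank dim_is_n in auto)
  then have "span S = carrier_vec m"
    by (simp add: basis_def)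
  then obtain a X where X: "y = lincomb a X" "finite X" "X \<subseteq> S"
    using y unfolding span_def by blast
  have orth: "x \<bullet> y = 0" if x: "x \<in> S" for x
  proof -
    obtain j where j: "j < k" "x = col A j"
      using SA x A by (auto simp: cols_def)
    then have "(A\<^sup>T *\<^sub>v y) $ j = x \<bullet> y"
      using A by simp
    then show ?thesis
      using Ay j by simp
  qed
  have "y \<bullet> y = 0"
    unfolding X(1) using X Sc y orth by (intro lincomb_scalar_prod_eq_0) auto
  then show "y = 0\<^sub>v m"
    using scalar_prod_self_pos[OF y] by fastforce
qed


section \<open>Perturbing one factor of a product\<close>

lemma wprod_empty: "wprod d W i (Suc i) = 1\<^sub>m (d i)"
  unfolding wprod_def by simp

lemma wprod_Suc: "j \<le> Suc i \<Longrightarrow> wprod d W (Suc i) j = W (Suc i) * wprod d W i j"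
  unfolding wprod_def by (simp add: upt_Suc_append)

lemma wprod_cong: "(\<And>l. j \<le> l \<Longrightarrow> l \<le> i \<Longrightarrow> V l = W l) \<Longrightarrow> wprod d V i j = wprod d W i j"
  unfolding wprod_def by (intro arg_cong2[where f = "foldr (*)"] map_cong) auto

lemma wprod_carrier:
  assumes "1 \<le> j" "j \<le> Suc i" "\<forall>l\<in>{j..i}. W l \<in> carrier_mat (d l) (d (l - 1))"
  shows "wprod d W i j \<in> carrier_mat (d i) (d (j - 1))"
  using assms
proof (induction i)
  case 0
  then show ?case
    using wprod_empty[of d W 0] by simp
next
  case (Suc i)
  show ?case
  proof (cases "j = Suc (Suc i)")
    case True
    then show ?thesis
      using wprod_empty[of d W "Suc i"] by simp
  next
    case False
    then have j: "j \<le> Suc i"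
      using Suc.prems by simp
    then have "W (Suc i) \<in> carrier_mat (d (Suc i)) (d i)"
      using Suc.prems(3) by fastforce
    moreover have "wprod d W i j \<in> carrier_mat (d i) (d (j - 1))"
      using Suc.IH Suc.prems j by auto
    ultimately show ?thesis
      unfolding wprod_Suc[OF j] by simp
  qed
qed

lemma wprod_split:
  assumes "1 \<le> j" "j \<le> Suc k" "k \<le> i" "\<forall>l\<in>{j..i}. W l \<in> carrier_mat (d l) (d (l - 1))"
  shows "wprod d W i j = wprod d W i (Suc k) * wprod d W k j"
  using assms
proof (induction i)
  case 0
  then have "wprod d W 0 j \<in> carrier_mat (d 0) (d (j - 1))"
    by (intro wprod_carrier) auto
  then show ?case
    using 0 wprod_empty[of d W 0] by simp
next
  case (Suc i)
  show ?case
  proof (cases "k = Suc i")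
    case True
    have "wprod d W (Suc i) j \<in> carrier_mat (d (Suc i)) (d (j - 1))"
      using Suc.prems True by (intro wprod_carrier) auto
    then show ?thesis
      using True wprod_empty[of d W "Suc i"] by simp
  next
    case False
    then have k: "k \<le> i" and j: "j \<le> Suc i"
      using Suc.prems by auto
    have W: "W (Suc i) \<in> carrier_mat (d (Suc i)) (d i)"
      using Suc.prems(4) j by fastforce
    have c1: "wprod d W i (Suc k) \<in> carrier_mat (d i) (d k)"
      using Suc.prems k by (intro wprod_carrier[where j = "Suc k", simplified]) auto
    have c2: "wprod d W k j \<in> carrier_mat (d k) (d (j - 1))"
      using Suc.prems k by (intro wprod_carrier) auto
    have "wprod d W (Suc i) j = W (Suc i) * (wprod d W i (Suc k) * wprod d W k j)"
      using wprod_Suc[OF j] Suc.IH Suc.prems k by auto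
    also have "\<dots> = (W (Suc i) * wprod d W i (Suc k)) * wprod d W k j"
      using assoc_mult_mat[OF W c1 c2] by simp
    also have "\<dots> = wprod d W (Suc i) (Suc k) * wprod d W k j"
      using wprod_Suc[of "Suc k" i d W] k by simp
    finally show ?thesis .
  qed
qed

lemma wprod_perturb_factor:
  fixes C :: "real mat"
  assumes j: "1 \<le> j" "j \<le> n" and W: "\<forall>l\<in>{1..n}. W l \<in> carrier_mat (d l) (d (l - 1))"
    and C: "C \<in> carrier_mat (d j) (d (j - 1))"
  shows "wprod d (\<lambda>l. if l = j then W l + C else W l) n 1
           = wprod d W n 1 + wprod d W n (Suc j) * (C * wprod d W (j - 1) 1)"
proof -
  define V where "V l = (if l = j then W l + C else W l)" for l
  have V: "\<forall>l\<in>{1..n}. V l \<in> carrier_mat (d l) (d (l - 1))"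
    using W C by (simp add: V_def)
  have split: "wprod d U n 1 = wprod d U n (Suc j) * (U j * wprod d U (j - 1) 1)"
    if U: "\<forall>l\<in>{1..n}. U l \<in> carrier_mat (d l) (d (l - 1))" for U
  proof -
    have "wprod d U n 1 = wprod d U n (Suc j) * wprod d U j 1"
      using j U by (intro wprod_split) auto
    moreover have "wprod d U j 1 = U j * wprod d U (j - 1) 1"
      using wprod_Suc[of 1 "j - 1" d U] j by simp
    ultimately show ?thesis
      by simp
  qed
  have V_outer: "wprod d V n (Suc j) = wprod d W n (Suc j)" "wprod d V (j - 1) 1 = wprod d W (j - 1) 1"
    by (auto intro!: wprod_cong simp: V_def)
  have outer: "wprod d W n (Suc j) \<in> carrier_mat (d n) (d j)"
    using j W by (intro wprod_carrier[where j = "Suc j", simplified]) auto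
  have inner: "wprod d W (j - 1) 1 \<in> carrier_mat (d (j - 1)) (d (1 - 1))"
    using j W by (intro wprod_carrier) auto
  have "W j \<in> carrier_mat (d j) (d (j - 1))"
    using j W by auto
  then have "(W j + C) * wprod d W (j - 1) 1 = W j * wprod d W (j - 1) 1 + C * wprod d W (j - 1) 1"
    using C inner by (rule add_mult_distrib_mat)
  also have "wprod d W n (Suc j) * \<dots> = wprod d W n (Suc j) * (W j * wprod d W (j - 1) 1)
      + wprod d W n (Suc j) * (C * wprod d W (j - 1) 1)"
    using outer \<open>W j \<in> _\<close> C inner by (intro mult_add_distrib_mat) auto
  finally show ?thesis
    unfolding V_def[symmetric] split[OF V] split[OF W] V_outer by (simp add: V_def)
qed

lemma frob_norm_perturb_factor_diff:
  assumes "W l \<in> carrier_mat (d l) (d (l - 1))" and "C \<in> carrier_mat (d j) (d (j - 1))"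
  shows "frob_norm ((if l = j then W l + C else W l) - W l) = (if l = j then frob_norm C else 0)"
proof (cases "l = j")
  case True
  then have "(W l + C) - W l = C"
    using assms by (intro eq_matI) auto
  with True show ?thesis
    by simp
qed (use assms in \<open>simp add: frob_norm_def\<close>)

definition middle_correction :: "real mat \<Rightarrow> real mat \<Rightarrow> real mat \<Rightarrow> real mat" where
  "middle_correction A B E = right_inverse_mat A * E * left_inverse_mat B"

context
  fixes A B E :: "real mat" and m k q p :: nat
  assumes A: "A \<in> carrier_mat m k"
    and A_inj: "\<And>y. y \<in> carrier_vec m \<Longrightarrow> A\<^sup>T *\<^sub>v y = 0\<^sub>v k \<Longrightarrow> y = 0\<^sub>v m"
    and B: "B \<in> carrier_mat q p"
    and B_inj: "\<And>v. v \<in> carrier_vec p \<Longrightarrow> B *\<^sub>v v = 0\<^sub>v q \<Longrightarrow> v = 0\<^sub>v p"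
    and E: "E \<in> carrier_mat m p"
begin

lemma middle_correction_carrier: "middle_correction A B E \<in> carrier_mat k q"
  unfolding middle_correction_def
  using right_inverse_mat_carrier[OF A A_inj] left_inverse_mat_carrier[OF B B_inj] E by simp

lemma middle_correction_eq:
  "A\<^sup>T * minv (A * A\<^sup>T) * E * minv (B\<^sup>T * B) * B\<^sup>T = middle_correction A B E"
proof -
  have "B\<^sup>T \<in> carrier_mat p q"
    using B by simp
  moreover have "minv (B\<^sup>T * B) \<in> carrier_mat p p"
    using gram_mat_inverse(1)[of "B\<^sup>T" p q] B B_inj by simp
  moreover have "right_inverse_mat A * E \<in> carrier_mat k p"
    using right_inverse_mat_carrier[OF A A_inj] E by simp
  ultimately show ?thesis
    unfolding middle_correction_def right_inverse_mat_def left_inverse_mat_def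
    by (simp add: assoc_mult_mat[of _ k p _ p _ q])
qed

lemma mult_middle_correction: "A * (middle_correction A B E * B) = E"
proof -
  note R = right_inverse_mat_carrier[OF A A_inj] and L = left_inverse_mat_carrier[OF B B_inj]
  have "right_inverse_mat A * E \<in> carrier_mat k p"
    using R E by simp
  then have "middle_correction A B E * B = right_inverse_mat A * E * (left_inverse_mat B * B)"
    unfolding middle_correction_def using L B by (rule assoc_mult_mat)
  also have "\<dots> = right_inverse_mat A * E"
    using left_inverse_mat_mult[OF B B_inj] R E by simp
  finally have "A * (middle_correction A B E * B) = A * right_inverse_mat A * E"
    using A R E by (simp add: assoc_mult_mat[of _ m k _ m _ p])
  then show ?thesis
    using mult_right_inverse_mat[OF A A_inj] E by simp
qed

lemma frob_norm_middle_correction_le: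
  assumes "m \<le> k" "p \<le> q" and "0 \<le> eps"
    and small: "frob_norm E \<le> sigma_min A * sigma_min B * eps"
  shows "frob_norm (middle_correction A B E) \<le> eps"
proof -
  have RE: "right_inverse_mat A * E \<in> carrier_mat k p"
    using right_inverse_mat_carrier[OF A A_inj] E by simp
  have 1: "frob_norm (middle_correction A B E) \<le> frob_norm (right_inverse_mat A * E) / sigma_min B"
    unfolding middle_correction_def
    by (rule frob_norm_mult_left_inverse_le[OF B \<open>p \<le> q\<close>]) (fact B_inj, fact RE)
  have 2: "frob_norm (right_inverse_mat A * E) \<le> frob_norm E / sigma_min A"
    by (rule frob_norm_right_inverse_mult_le[OF A]) (fact A_inj, fact \<open>m \<le> k\<close>, fact E)
  show ?thesis
  proof (cases "m = 0 \<or> p = 0")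
    case True
    then have "frob_norm E = 0"
      using E by (auto simp: frob_norm_def)
    then have "frob_norm (right_inverse_mat A * E) = 0"
      using 2 frob_norm_nonneg[of "right_inverse_mat A * E"] by simp
    then show ?thesis
      using 1 \<open>0 \<le> eps\<close> by simp
  next
    case False
    have "sigma_min A > 0"
      using sigma_min_pos[OF A] A_inj False \<open>m \<le> k\<close> by blast
    moreover have "sigma_min B > 0"
      using sigma_min_pos[of "B\<^sup>T" p q] B B_inj False \<open>p \<le> q\<close> by (simp add: sigma_min_transpose)
    ultimately have "frob_norm E / sigma_min A / sigma_min B \<le> eps"
      using small by (simp add: divide_le_eq mult.commute mult.left_commute)
    moreover have "frob_norm (right_inverse_mat A * E) / sigma_min B \<le> frob_norm E / sigma_min A / sigma_min B"
      using divide_right_mono[OF 2] \<open>sigma_min B > 0\<close> by simp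
    ultimately show ?thesis
      using 1 by linarith
  qed
qed

end

theorem lemmaA6:
  fixes H jstar :: nat and d :: "nat \<Rightarrow> nat" and W :: "nat \<Rightarrow> real mat"
    and eps :: real and R :: "real mat"
  assumes "H \<ge> 1"
    and "\<forall>j\<in>{1..H+1}. W j \<in> carrier_mat (d j) (d (j - 1))"
    and "jstar \<in> {1..H+1}"
    and "eps > 0"
    and "full_row_rank (wprod d W (H+1) (jstar+1))"
    and "full_col_rank (wprod d W (jstar - 1) 1)"
    and "R \<in> carrier_mat (d (H+1)) (d 0)"
    and "frob_norm (R - wprod d W (H+1) 1)
           \<le> sigma_min (wprod d W (H+1) (jstar+1)) * sigma_min (wprod d W (jstar - 1) 1) * eps"
  shows "let A = wprod d W (H+1) (jstar+1); B = wprod d W (jstar - 1) 1;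
             V = (\<lambda>j. if j = jstar then
                   W j + transpose_mat A * minv (A * transpose_mat A) * (R - wprod d W (H+1) 1)
                         * minv (transpose_mat B * B) * transpose_mat B
                 else W j)
         in R = wprod d V (H+1) 1 \<and> (\<forall>j\<in>{1..H+1}. frob_norm (V j - W j) \<le> eps)"
proof -
  have j: "1 \<le> jstar" "jstar \<le> H + 1"
    using assms(3) by auto
  define A B E where "A = wprod d W (H+1) (jstar+1)" and "B = wprod d W (jstar - 1) 1"
    and "E = R - wprod d W (H+1) 1"
  have A: "A \<in> carrier_mat (d (H+1)) (d jstar)"
    unfolding A_def using wprod_carrier[of "jstar+1" "H+1" W d] j assms(2) by auto
  have B: "B \<in> carrier_mat (d (jstar - 1)) (d (1 - 1))"
    unfolding B_def using j assms(2) by (intro wprod_carrier) auto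
  have E: "E \<in> carrier_mat (d (H+1)) (d (1 - 1))"
    unfolding E_def using assms(2,7) wprod_carrier[of 1 "H+1" W d] by auto
  note A_inj = full_row_rank_transpose_mult_vec_eq_0[OF A assms(5)[folded A_def]]
  note B_inj = full_col_rank_mult_vec_eq_0[OF B assms(6)[folded B_def]]
  have C: "middle_correction A B E \<in> carrier_mat (d jstar) (d (jstar - 1))"
    using middle_correction_carrier[OF A A_inj B B_inj E] by simp
  have "wprod d W (H+1) 1 + E = R"
    unfolding E_def using assms(2,7) wprod_carrier[of 1 "H+1" W d] by (intro eq_matI) auto
  then have "wprod d (\<lambda>l. if l = jstar then W l + middle_correction A B E else W l) (H+1) 1 = R"
    using wprod_perturb_factor[OF j assms(2) C] mult_middle_correction[OF A A_inj B B_inj E]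
    by (simp add: A_def B_def)
  moreover have "frob_norm (middle_correction A B E) \<le> eps"
    using frob_norm_middle_correction_le[OF A A_inj B B_inj E] assms(4,5,6,8)
      full_row_rank_imp_le[OF A] full_col_rank_imp_le[OF B] by (simp add: A_def B_def E_def)
  then have "frob_norm ((if l = jstar then W l + middle_correction A B E else W l) - W l) \<le> eps"
    if "l \<in> {1..H+1}" for l
    using frob_norm_perturb_factor_diff[of W l d, OF assms(2)[rule_format, OF that] C] assms(4) by simp
  moreover have explicit: "A\<^sup>T * minv (A * A\<^sup>T) * E * minv (B\<^sup>T * B) * B\<^sup>T = middle_correction A B E"
    using middle_correction_eq[OF A A_inj B B_inj E] by simp
  ultimately show ?thesis
    unfolding Let_def E_def[symmetric] A_def[symmetric] B_def[symmetric] explicit by simp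
qed

end
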